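(* Fix integers $N\ge 1$, $M\ge 1$, $K\ge 1$, a wavelength $\lambda>0$, a reference path gain $\beta\in(0,1)$, and positive distances $d_{0,a_1}$, $d_{a_K,J+1}$ and $d_{a_k,a_{k+1}}$ ($k=1,\dots,K-1$). Consider a multi-hop reflection route from a base station (BS) with $N$ antennas through $K$ distinct intelligent reflecting surfaces (IRSs) $a_1,\dots,a_K$, each with $M$ reflecting elements, to a single-antenna user, with line-of-sight channels $$\mathbf H_{0,a_1}=\frac{\sqrt\beta}{d_{0,a_1}}e^{-\frac{j2\pi d_{0,a_1}}{\lambda}}\tilde{\mathbf h}_{a_1,2}\tilde{\mathbf h}_{a_1,1}^H\in\mathbb C^{M\times N},$$ $$\mathbf S_{a_k,a_{k+1}}=\frac{\sqrt\beta}{d_{a_k,a_{k+1}}}e^{-\frac{j2\pi d_{a_k,a_{k+1}}}{\lambda}}\tilde{\mathbf s}_{a_k,a_{k+1},2}\tilde{\mathbf s}_{a_k,a_{k+1},1}^H\in\mathbb C^{M\times M}\ (1\le k\le K-1),$$ $$\mathbf g_{a_K,J+1}^H=\frac{\sqrt\beta}{d_{a_K,J+1}}e^{-\frac{j2\pi d_{a_K,J+1}}{\lambda}}\tilde{\mathbf g}_{a_K,J+1}^H\in\mathbb C^{1\times M},$$ where $\tilde{\mathbf h}_{a_1,1}=\mathbf a_B(\vartheta_{0,a_1})$, and $\tilde{\mathbf h}_{a_1,2}$, $\tilde{\mathbf s}_{a_k,a_{k+1},1}$, $\tilde{\mathbf s}_{a_k,a_{k+1},2}$, $\tilde{\mathbf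 g}_{a_K,J+1}$ are IRS array responses $\mathbf a_I(\cdot,\cdot)$ at arbitrary angles (see context). For phase shifts $\theta_{a_k,m}\in\mathbb R$ let $\mathbf\Phi_{a_k}=\mathrm{diag}(e^{j\theta_{a_k,1}},\dots,e^{j\theta_{a_k,M}})$, and for a BS beamformer $\mathbf w_B\in\mathbb C^N$ with $\|\mathbf w_B\|=1$ define the end-to-end channel $$h_{0,J+1}=\mathbf g_{a_K,J+1}^H\mathbf\Phi_{a_K}\mathbf S_{a_{K-1},a_K}\mathbf\Phi_{a_{K-1}}\cdots\mathbf S_{a_1,a_2}\mathbf\Phi_{a_1}\mathbf H_{0,a_1}\mathbf w_B$$ (for $K=1$: $h_{0,J+1}=\mathbf g_{a_1,J+1}^H\mathbf\Phi_{a_1}\mathbf H_{0,a_1}\mathbf w_B$). Then the maximum of $|h_{0,J+1}|^2$ over all phase shifts $\{\theta_{a_k,m}\}$ and all unit-norm $\mathbf w_B$ equals $$M^{2K}N\kappa^2=\frac{M^{2K}N\beta^{K+1}}{d_{0,a_1}^2\,d_{a_K,J+1}^2\prod_{k=1}^{K-1}d_{a_k,a_{k+1}}^2},\qquad \kappa=\frac{(\sqrt\beta)^{K+1}}{d_{0,a_1}d_{a_K,J+1}\prod_{k=1}^{K-1}d_{a_k,a_{k+1}}},$$ and it is attained by $\mathbf w_B=e^{\frac{j2\pi D}{\lambda}}\tilde{\mathbf h}_{a_1,1}/\|\tilde{\mathbf h}_{a_1,1}\|$ with $D=d_{0,a_1}+d_{a_K,J+1}+\sum_{k=1}^{K-1}d_{a_k,a_{k+1}}$,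 and, for each $m\in\{1,\dots,M\}$, $\theta_{a_k,m}=\angle(\mathbf y_k)_m-\angle(\mathbf x_k)_m$, where the incoming vector is $\mathbf x_1=\tilde{\mathbf h}_{a_1,2}$ and $\mathbf x_k=\tilde{\mathbf s}_{a_{k-1},a_k,2}$ for $k\ge2$, and the outgoing vector is $\mathbf y_k=\tilde{\mathbf s}_{a_k,a_{k+1},1}$ for $k\le K-1$ and $\mathbf y_K=\tilde{\mathbf g}_{a_K,J+1}$.
   Context: $j$ denotes the imaginary unit; $\angle s$ is the phase of a complex number $s$ and $(\mathbf v)_m$ the $m$-th entry of a vector. The BS array response (uniform linear array with antenna spacing $d_A$) is $\mathbf a_B(\vartheta)\in\mathbb C^N$ with $(\mathbf a_B(\vartheta))_n=e^{-j2\pi(n-1)d_A\sin\vartheta/\lambda}$. Each IRS is a uniform rectangular array with $M=M_1M_2$ elements and element spacing $d_I$, with array response $\mathbf a_I(\vartheta^a,\vartheta^e)\in\mathbb C^M$, $(\mathbf a_I(\vartheta^a,\vartheta^e))_m=e^{-j2\pi d_I(\lfloor\frac{m-1}{M_1}\rfloor\sin\vartheta^e\cos\vartheta^a+(m-1-\lfloor\frac{m-1}{M_1}\rfloor M_1)\cos\vartheta^e)/\lambda}$, where $\vartheta^a,\vartheta^e$ are azimuth/elevation angles of arrival or departure. The vectors $\tilde{\mathbf h}_{a_1,2}$ (arrival at IRS $a_1$ from the BS), $\tilde{\mathbf s}_{a_k,a_{k+1},1}$ (departure from IRS $a_k$ toward IRS $a_{k+1}$), $\tilde{\mathbf s}_{a_k,a_{k+1},2}$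 (arrival at IRS $a_{k+1}$ from IRS $a_k$), and $\tilde{\mathbf g}_{a_K,J+1}$ (departure from IRS $a_K$ toward the user) are each of the form $\mathbf a_I(\vartheta^a,\vartheta^e)$ for some (arbitrary) angles. *)

theory Defs
  imports Complex_Main
begin

text \<open>Vectors in C^n are modelled as functions nat => complex, with entries
indexed 0..n-1 (entry i corresponds to the paper's entry i+1).\<close>

definition aB :: "real \<Rightarrow> real \<Rightarrow> real \<Rightarrow> nat \<Rightarrow> complex" where
  "aB dA lam th n = cis (- 2 * pi * real n * dA * sin th / lam)"

text \<open>IRS array response (URA with M1 columns), 0-based index m (paper: m-1).\<close>
definition aI :: "nat \<Rightarrow> real \<Rightarrow> real \<Rightarrow> real \<Rightarrow> real \<Rightarrow> nat \<Rightarrow> complex" where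
  "aI M1 dI lam az el m =
     cis (- 2 * pi * dI * (real (m div M1) * sin el * cos az + real (m mod M1) * cos el) / lam)"

definition vnorm :: "nat \<Rightarrow> (nat \<Rightarrow> complex) \<Rightarrow> real" where
  "vnorm n v = sqrt (\<Sum>i<n. (cmod (v i))\<^sup>2)"

definition pgain :: "real \<Rightarrow> real \<Rightarrow> real \<Rightarrow> complex" where
  "pgain beta lam d = complex_of_real (sqrt beta / d) * cis (- 2 * pi * d / lam)"

definition rank1 :: "complex \<Rightarrow> (nat \<Rightarrow> complex) \<Rightarrow> (nat \<Rightarrow> complex) \<Rightarrow> nat \<Rightarrow> (nat \<Rightarrow> complex) \<Rightarrow> nat \<Rightarrow> complex" where
  "rank1 c u v n x = (\<lambda>m. c * u m * (\<Sum>i<n. cnj (v i) * x i))"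

definition phase :: "(nat \<Rightarrow> real) \<Rightarrow> (nat \<Rightarrow> complex) \<Rightarrow> nat \<Rightarrow> complex" where
  "phase th x = (\<lambda>m. cis (th m) * x m)"

text \<open>Signal arriving at IRS a_(k+1):
  stage 0 = H_{0,a_1} w ;  stage (k+1) = S_{a_(k+1),a_(k+2)} Phi_{a_(k+1)} (stage k).
  Here cS k, s2 k, s1 k describe the link a_k -> a_(k+1) (k >= 1) and th k the
  phase shifts of IRS a_k.\<close>
primrec stage :: "nat \<Rightarrow> (nat \<Rightarrow> complex) \<Rightarrow> (nat \<Rightarrow> nat \<Rightarrow> complex) \<Rightarrow> (nat \<Rightarrow> nat \<Rightarrow> complex)
    \<Rightarrow> (nat \<Rightarrow> nat \<Rightarrow> real) \<Rightarrow> (nat \<Rightarrow> complex) \<Rightarrow> nat \<Rightarrow> nat \<Rightarrow> complex" where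
  "stage M cS s2 s1 th v0 0 = v0"
| "stage M cS s2 s1 th v0 (Suc k) =
     rank1 (cS (Suc k)) (s2 (Suc k)) (s1 (Suc k)) M (phase (th (Suc k)) (stage M cS s2 s1 th v0 k))"

definition e2e :: "nat \<Rightarrow> nat \<Rightarrow> real \<Rightarrow> real \<Rightarrow> real \<Rightarrow> (nat \<Rightarrow> real) \<Rightarrow> real
    \<Rightarrow> (nat \<Rightarrow> complex) \<Rightarrow> (nat \<Rightarrow> complex) \<Rightarrow> (nat \<Rightarrow> nat \<Rightarrow> complex) \<Rightarrow> (nat \<Rightarrow> nat \<Rightarrow> complex)
    \<Rightarrow> (nat \<Rightarrow> complex) \<Rightarrow> nat \<Rightarrow> (nat \<Rightarrow> nat \<Rightarrow> real) \<Rightarrow> (nat \<Rightarrow> complex) \<Rightarrow> complex" where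
  "e2e N M beta lam d0 ds dJ h1 h2 s1 s2 g K th w =
     (let v0 = rank1 (pgain beta lam d0) h2 h1 N w;
          vK = stage M (\<lambda>k. pgain beta lam (ds k)) s2 s1 th v0 (K - 1)
      in pgain beta lam dJ * (\<Sum>m<M. cnj (g m) * phase (th K) vK m))"

end

theory Submission
  imports Defs "HOL-Analysis.L2_Norm"
begin

text \<open>Every channel on the route is rank one, so the signal impinging on IRS \<open>a\<^sub>k\<close> is a scalar
multiple of its arrival response \<open>x\<^sub>k\<close>, and each reflection multiplies that scalar by
\<open>y\<^sub>k\<^sup>H \<Phi>\<^sub>k x\<^sub>k\<close>. Hence the end-to-end channel factors into the path gains, the BS inner product
\<open>h\<^sub>1\<^sup>H w\<close> and the \<open>K\<close> reflection gains. All array responses are unimodular, so each reflection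
gain has modulus at most \<open>M\<close>, with equality when the phases align incoming with outgoing
responses, and \<open>|h\<^sub>1\<^sup>H w| \<le> \<surd>N\<close> by Cauchy-Schwarz, with equality for \<open>w\<close> parallel to \<open>h\<^sub>1\<close>.\<close>

text \<open>\<open>irs_gain M y th x\<close> is \<open>y\<^sup>H \<Phi> x\<close>; \<open>incoming h2 s2 k\<close> and \<open>outgoing K s1 g k\<close> are the
paper's \<open>x\<^sub>k\<close> and \<open>y\<^sub>k\<close>, meaningful for \<open>1 \<le> k \<le> K\<close>.\<close>

definition irs_gain :: "nat \<Rightarrow> (nat \<Rightarrow> complex) \<Rightarrow> (nat \<Rightarrow> real) \<Rightarrow> (nat \<Rightarrow> complex) \<Rightarrow> complex" where
  "irs_gain M y th x = (\<Sum>m<M. cnj (y m) * phase th x m)"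

definition incoming :: "(nat \<Rightarrow> complex) \<Rightarrow> (nat \<Rightarrow> nat \<Rightarrow> complex) \<Rightarrow> nat \<Rightarrow> nat \<Rightarrow> complex" where
  "incoming h2 s2 k = (if k = 1 then h2 else s2 (k - 1))"

definition outgoing :: "nat \<Rightarrow> (nat \<Rightarrow> nat \<Rightarrow> complex) \<Rightarrow> (nat \<Rightarrow> complex) \<Rightarrow> nat \<Rightarrow> nat \<Rightarrow> complex" where
  "outgoing K s1 g k = (if k < K then s1 k else g)"

lemma irs_gain_scale: "irs_gain M y th (\<lambda>m. c * x m) = c * irs_gain M y th x"
  by (simp add: irs_gain_def phase_def sum_distrib_left mult_ac)

lemma norm_irs_gain_le:
  assumes "\<forall>m<M. cmod (y m) = 1" and "\<forall>m<M. cmod (x m) = 1"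
  shows "cmod (irs_gain M y th x) \<le> real M"
proof -
  have "cmod (irs_gain M y th x) \<le> (\<Sum>m<M. cmod (cnj (y m) * phase th x m))"
    unfolding irs_gain_def by (rule norm_sum)
  also have "\<dots> = (\<Sum>m<M. 1)"
    using assms by (intro sum.cong) (auto simp: phase_def norm_mult)
  finally show ?thesis by simp
qed

lemma irs_gain_aligned:
  assumes "\<forall>m<M. cmod (y m) = 1" and "\<forall>m<M. cmod (x m) = 1"
    and "\<forall>m<M. th m = Arg (y m) - Arg (x m)"
  shows "irs_gain M y th x = of_nat M"
proof -
  have "cnj (y m) * phase th x m = 1" if "m < M" for m
  proof -
    have "x m \<noteq> 0" "y m \<noteq> 0" "cnj (y m) * y m = 1"
      using assms(1,2) complex_norm_square[of "y m"] \<open>m < M\<close> by (auto simp: mult.commute)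
    moreover have "cis (th m) = y m / x m"
      using assms \<open>m < M\<close> \<open>x m \<noteq> 0\<close> \<open>y m \<noteq> 0\<close>
      by (simp add: cis_divide[symmetric] cis_Arg sgn_div_norm)
    ultimately show ?thesis by (simp add: phase_def field_simps)
  qed
  then show ?thesis by (simp add: irs_gain_def)
qed

lemma stage_scaled:
  "stage M cS s2 s1 th (\<lambda>m. a * h2 m) k =
     (\<lambda>m. (a * (\<Prod>i\<in>{1..k}. cS i * irs_gain M (s1 i) (th i) (incoming h2 s2 i)))
          * incoming h2 s2 (Suc k) m)"
proof (induction k)
  case 0
  show ?case by (simp add: incoming_def)
next
  case (Suc k)
  have next_incoming: "incoming h2 s2 (Suc (Suc k)) = s2 (Suc k)"
    by (simp add: incoming_def)
  let ?C = "a * (\<Prod>i\<in>{1..k}. cS i * irs_gain M (s1 i) (th i) (incoming h2 s2 i))"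
  let ?G = "irs_gain M (s1 (Suc k)) (th (Suc k)) (incoming h2 s2 (Suc k))"
  have "stage M cS s2 s1 th (\<lambda>m. a * h2 m) (Suc k) =
      (\<lambda>m. cS (Suc k) * s2 (Suc k) m * irs_gain M (s1 (Suc k)) (th (Suc k))
                                         (\<lambda>m. ?C * incoming h2 s2 (Suc k) m))"
    by (simp add: Suc.IH rank1_def irs_gain_def)
  also have "\<dots> = (\<lambda>m. (?C * (cS (Suc k) * ?G)) * s2 (Suc k) m)"
    by (simp only: irs_gain_scale) (simp add: mult_ac)
  finally show ?case using next_incoming by (simp add: ac_simps)
qed

lemma e2e_factorization:
  assumes "K \<ge> 1"
  shows "e2e N M beta lam d0 ds dJ h1 h2 s1 s2 g K th w =
    pgain beta lam d0 * pgain beta lam dJ * (\<Prod>k\<in>{1..K-1}. pgain beta lam (ds k))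
    * (\<Sum>i<N. cnj (h1 i) * w i)
    * (\<Prod>k\<in>{1..K}. irs_gain M (outgoing K s1 g k) (th k) (incoming h2 s2 k))"
proof -
  let ?a = "pgain beta lam d0 * (\<Sum>i<N. cnj (h1 i) * w i)"
  let ?G = "\<lambda>k. irs_gain M (outgoing K s1 g k) (th k) (incoming h2 s2 k)"
  have K: "K = Suc (K - 1)" using assms by simp
  have "rank1 (pgain beta lam d0) h2 h1 N w = (\<lambda>m. ?a * h2 m)"
    by (simp add: rank1_def mult_ac)
  then have "e2e N M beta lam d0 ds dJ h1 h2 s1 s2 g K th w =
      pgain beta lam dJ * irs_gain M g (th K) (\<lambda>m. (?a * (\<Prod>i\<in>{1..K-1}.
        pgain beta lam (ds i) * irs_gain M (s1 i) (th i) (incoming h2 s2 i))) * incoming h2 s2 K m)"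
    by (subst K) (simp add: e2e_def stage_scaled irs_gain_def)
  also have "\<dots> = pgain beta lam dJ * ?a * (\<Prod>i\<in>{1..K-1}. pgain beta lam (ds i))
      * ((\<Prod>i\<in>{1..K-1}. irs_gain M (s1 i) (th i) (incoming h2 s2 i)) * ?G K)"
    by (simp only: irs_gain_scale prod.distrib) (simp add: outgoing_def mult_ac)
  also have "(\<Prod>i\<in>{1..K-1}. irs_gain M (s1 i) (th i) (incoming h2 s2 i)) = (\<Prod>i\<in>{1..K-1}. ?G i)"
    by (rule prod.cong) (auto simp: outgoing_def)
  also have "(\<Prod>i\<in>{1..K-1}. ?G i) * ?G K = prod ?G {1..K}"
    using prod.cl_ivl_Suc[of ?G 1 "K - 1"] assms by simp
  finally show ?thesis by (simp add: mult_ac)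
qed

lemma vnorm_scale: "vnorm N (\<lambda>i. c * v i) = cmod c * vnorm N v"
  by (simp add: vnorm_def norm_mult power_mult_distrib sum_distrib_left[symmetric] real_sqrt_mult)

lemma vnorm_unimodular: "\<forall>i<N. cmod (v i) = 1 \<Longrightarrow> vnorm N v = sqrt (real N)"
  by (simp add: vnorm_def)

lemma norm_inner_le_vnorm: "cmod (\<Sum>i<N. cnj (h i) * w i) \<le> vnorm N h * vnorm N w"
proof -
  have "cmod (\<Sum>i<N. cnj (h i) * w i) \<le> (\<Sum>i<N. \<bar>cmod (h i)\<bar> * \<bar>cmod (w i)\<bar>)"
    using norm_sum[of "\<lambda>i. cnj (h i) * w i" "{..<N}"] by (simp add: norm_mult)
  also have "\<dots> \<le> L2_set (\<lambda>i. cmod (h i)) {..<N} * L2_set (\<lambda>i. cmod (w i)) {..<N}"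
    by (rule L2_set_mult_ineq)
  finally show ?thesis by (simp add: vnorm_def L2_set_def)
qed

lemma vnorm_square: "(vnorm N v)\<^sup>2 = (\<Sum>i<N. (cmod (v i))\<^sup>2)"
  by (simp add: vnorm_def sum_nonneg)

lemma inner_self_vnorm: "(\<Sum>i<N. cnj (h i) * h i) = complex_of_real ((vnorm N h)\<^sup>2)"
  by (simp only: vnorm_square of_real_sum complex_norm_square) (simp add: mult.commute)

lemma
  fixes h :: "nat \<Rightarrow> complex" and t :: real
  assumes "vnorm N h \<noteq> 0"
  defines "w \<equiv> \<lambda>i. cis t * h i / complex_of_real (vnorm N h)"
  shows vnorm_phase_normalized: "vnorm N w = 1"
    and inner_phase_normalized: "(\<Sum>i<N. cnj (h i) * w i) = cis t * complex_of_real (vnorm N h)"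
proof -
  have w: "w = (\<lambda>i. (cis t / complex_of_real (vnorm N h)) * h i)"
    by (simp add: w_def)
  have "vnorm N h \<ge> 0" by (simp add: vnorm_def sum_nonneg)
  with assms(1) show "vnorm N w = 1"
    unfolding w vnorm_scale by (simp add: norm_divide)
  have "(\<Sum>i<N. cnj (h i) * w i) = cis t / complex_of_real (vnorm N h) * (\<Sum>i<N. cnj (h i) * h i)"
    by (simp add: w sum_distrib_left mult_ac)
  with assms(1) show "(\<Sum>i<N. cnj (h i) * w i) = cis t * complex_of_real (vnorm N h)"
    by (simp add: inner_self_vnorm power2_eq_square)
qed

definition route_gain :: "real \<Rightarrow> real \<Rightarrow> real \<Rightarrow> (nat \<Rightarrow> real) \<Rightarrow> nat \<Rightarrow> real" where
  "route_gain beta d0 dJ ds K = sqrt beta / d0 * (sqrt beta / dJ) * (\<Prod>k\<in>{1..K-1}. sqrt beta / ds k)"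

lemma route_gain_nonneg:
  assumes "beta \<ge> 0" and "d0 > 0" and "dJ > 0" and "\<forall>k\<in>{1..K-1}. ds k > 0"
  shows "route_gain beta d0 dJ ds K \<ge> 0"
  unfolding route_gain_def using assms
  by (intro mult_nonneg_nonneg prod_nonneg divide_nonneg_pos) auto

lemma route_gain_square:
  assumes "K \<ge> 1" and "beta \<ge> 0"
  shows "(route_gain beta d0 dJ ds K)\<^sup>2 =
    beta ^ (K + 1) / (d0\<^sup>2 * dJ\<^sup>2 * (\<Prod>k\<in>{1..K-1}. (ds k)\<^sup>2))"
proof -
  have "(\<Prod>k\<in>{1..K-1}. sqrt beta / ds k)\<^sup>2 = (\<Prod>k\<in>{1..K-1}. beta / (ds k)\<^sup>2)"
    unfolding prod_power_distrib using assms(2) by (simp add: power_divide)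
  also have "\<dots> = beta ^ (K - 1) / (\<Prod>k\<in>{1..K-1}. (ds k)\<^sup>2)"
    by (simp add: prod_dividef)
  finally have "(\<Prod>k\<in>{1..K-1}. sqrt beta / ds k)\<^sup>2 = \<dots>" .
  moreover have "beta ^ (K + 1) = beta\<^sup>2 * beta ^ (K - 1)"
    using assms(1) by (simp flip: power_add)
  ultimately show ?thesis
    using assms(2) by (simp add: route_gain_def power_mult_distrib power_divide)
qed

lemma norm_pgain: "beta \<ge> 0 \<Longrightarrow> d > 0 \<Longrightarrow> cmod (pgain beta lam d) = sqrt beta / d"
  by (simp add: pgain_def norm_mult norm_divide)

lemma norm_e2e:
  assumes "K \<ge> 1" and "beta \<ge> 0" and "d0 > 0" and "dJ > 0" and "\<forall>k\<in>{1..K-1}. ds k > 0"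
  shows "cmod (e2e N M beta lam d0 ds dJ h1 h2 s1 s2 g K th w) =
    route_gain beta d0 dJ ds K * cmod (\<Sum>i<N. cnj (h1 i) * w i)
    * (\<Prod>k\<in>{1..K}. cmod (irs_gain M (outgoing K s1 g k) (th k) (incoming h2 s2 k)))"
proof -
  have "(\<Prod>k\<in>{1..K-1}. cmod (pgain beta lam (ds k))) = (\<Prod>k\<in>{1..K-1}. sqrt beta / ds k)"
    using assms(2,5) by (intro prod.cong) (auto simp: norm_pgain)
  then show ?thesis
    using assms by (simp add: e2e_factorization route_gain_def norm_mult norm_pgain prod_norm[symmetric])
qed

lemma norm_e2e_le:
  assumes "K \<ge> 1" and "beta \<ge> 0" and "d0 > 0" and "dJ > 0" and "\<forall>k\<in>{1..K-1}. ds k > 0"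
    and "\<forall>i<N. cmod (h1 i) = 1" and "\<And>k m. cmod (outgoing K s1 g k m) = 1"
    and "\<And>k m. cmod (incoming h2 s2 k m) = 1" and "vnorm N w = 1"
  shows "cmod (e2e N M beta lam d0 ds dJ h1 h2 s1 s2 g K th w) \<le>
    route_gain beta d0 dJ ds K * sqrt (real N) * real M ^ K"
proof -
  have "cmod (\<Sum>i<N. cnj (h1 i) * w i) \<le> sqrt (real N)"
    using norm_inner_le_vnorm[where N = N and h = h1 and w = w] assms(6,9)
    by (simp add: vnorm_unimodular)
  moreover have "(\<Prod>k\<in>{1..K}. cmod (irs_gain M (outgoing K s1 g k) (th k) (incoming h2 s2 k)))
      \<le> (\<Prod>k\<in>{1..K}. real M)"
    by (intro prod_mono) (simp add: norm_irs_gain_le assms(7,8))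
  ultimately show ?thesis
    unfolding norm_e2e[OF assms(1-5)] using route_gain_nonneg[OF assms(2-5)]
    by (auto intro!: mult_mono prod_nonneg)
qed

lemma norm_e2e_aligned:
  assumes "K \<ge> 1" and "beta \<ge> 0" and "d0 > 0" and "dJ > 0" and "\<forall>k\<in>{1..K-1}. ds k > 0"
    and "\<And>k m. cmod (outgoing K s1 g k m) = 1" and "\<And>k m. cmod (incoming h2 s2 k m) = 1"
    and "\<And>k m. th k m = Arg (outgoing K s1 g k m) - Arg (incoming h2 s2 k m)"
  shows "cmod (e2e N M beta lam d0 ds dJ h1 h2 s1 s2 g K th w) =
    route_gain beta d0 dJ ds K * cmod (\<Sum>i<N. cnj (h1 i) * w i) * real M ^ K"
proof -
  have "irs_gain M (outgoing K s1 g k) (th k) (incoming h2 s2 k) = of_nat M" for k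
    by (rule irs_gain_aligned) (simp_all add: assms(6-8))
  then show ?thesis by (simp add: norm_e2e[OF assms(1-5)])
qed

theorem mainTheorem1:
  fixes N M1 M2 K :: nat
    and lam beta d0 dJ dA dI th0 hA hE gA gE :: real
    and ds s1A s1E s2A s2E :: "nat \<Rightarrow> real"
    and M :: nat and h1 h2 g :: "nat \<Rightarrow> complex" and s1 s2 :: "nat \<Rightarrow> nat \<Rightarrow> complex"
    and D :: real and wopt :: "nat \<Rightarrow> complex" and thopt :: "nat \<Rightarrow> nat \<Rightarrow> real"
    and X :: real
  assumes "N \<ge> 1" and "M1 \<ge> 1" and "M2 \<ge> 1" and "K \<ge> 1"
    and "lam > 0" and "0 < beta" and "beta < 1"
    and "d0 > 0" and "dJ > 0" and "\<forall>k\<in>{1..K-1}. ds k > 0"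
  defines "M \<equiv> M1 * M2"
    and "h1 \<equiv> aB dA lam th0"
    and "h2 \<equiv> aI M1 dI lam hA hE"
    and "s1 \<equiv> (\<lambda>k. aI M1 dI lam (s1A k) (s1E k))"
    and "s2 \<equiv> (\<lambda>k. aI M1 dI lam (s2A k) (s2E k))"
    and "g \<equiv> aI M1 dI lam gA gE"
    and "X \<equiv> real M ^ (2 * K) * real N * beta ^ (K + 1)
              / (d0\<^sup>2 * dJ\<^sup>2 * (\<Prod>k\<in>{1..K-1}. (ds k)\<^sup>2))"
    and "D \<equiv> d0 + dJ + (\<Sum>k\<in>{1..K-1}. ds k)"
    and "wopt \<equiv> (\<lambda>n. cis (2 * pi * D / lam) * h1 n / complex_of_real (vnorm N h1))"
    and "thopt \<equiv> (\<lambda>k m. Arg (if k < K then s1 k m else g m)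
                        - Arg (if k = 1 then h2 m else s2 (k - 1) m))"
  shows "(\<forall>th w. vnorm N w = 1 \<longrightarrow>
            (cmod (e2e N M beta lam d0 ds dJ h1 h2 s1 s2 g K th w))\<^sup>2 \<le> X)
       \<and> vnorm N wopt = 1
       \<and> (cmod (e2e N M beta lam d0 ds dJ h1 h2 s1 s2 g K thopt wopt))\<^sup>2 = X"
proof -
  have "beta \<ge> 0" using \<open>0 < beta\<close> by simp
  have ends_unimodular: "cmod (outgoing K s1 g k m) = 1" "cmod (incoming h2 s2 k m) = 1" for k m
    by (simp_all add: outgoing_def incoming_def s1_def g_def h2_def s2_def aI_def)
  have h1_unimodular: "\<forall>i<N. cmod (h1 i) = 1" by (simp add: h1_def aB_def)
  then have vnorm_h1: "vnorm N h1 = sqrt (real N)" by (rule vnorm_unimodular)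
  with \<open>N \<ge> 1\<close> have h1_nonzero: "vnorm N h1 \<noteq> 0" by simp
  have wopt: "vnorm N wopt = 1"
      "cmod (\<Sum>i<N. cnj (h1 i) * wopt i) = sqrt (real N)"
    using vnorm_phase_normalized[OF h1_nonzero, where t = "2 * pi * D / lam"]
      inner_phase_normalized[OF h1_nonzero, where t = "2 * pi * D / lam"]
    unfolding wopt_def vnorm_h1 by (simp_all add: norm_mult)
  have thopt_eq: "thopt k m = Arg (outgoing K s1 g k m) - Arg (incoming h2 s2 k m)" for k m
    by (simp add: thopt_def outgoing_def incoming_def)
  note aligned = norm_e2e_aligned[OF assms(4) \<open>beta \<ge> 0\<close> assms(8-10) ends_unimodular thopt_eq]
  have "(real M ^ K)\<^sup>2 = real M ^ (2 * K)"
    by (simp flip: power_mult add: mult.commute)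
  then have X_eq: "X = (route_gain beta d0 dJ ds K * sqrt (real N) * real M ^ K)\<^sup>2"
    unfolding X_def by (simp add: power_mult_distrib route_gain_square[OF assms(4) \<open>beta \<ge> 0\<close>])
  show ?thesis
    using norm_e2e_le[OF assms(4) \<open>beta \<ge> 0\<close> assms(8-10) h1_unimodular ends_unimodular]
      route_gain_nonneg[OF \<open>beta \<ge> 0\<close> assms(8-10)]
    by (auto simp: X_eq wopt aligned intro!: power_mono)
qed

end
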